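(* For every $c_s>0$, there exists $\epsilon_0>0$ such that whenever $\epsilon\in(0,\epsilon_0]$, there is a constant $\delta>0$ (depending on $c_s$ and $\epsilon$) such that $$\inf_{K\in[c_s,c_s^{-1}]}|c'(K)|\geq\delta,$$ where $c$ is the function associated with the potential $\Phi(x)=\frac{x^2}{2}+\frac{\epsilon x^4}{2}$ as described in the context.
   Context: Let $\epsilon>0$, $\Phi(x)=\frac{x^2}{2}+\frac{\epsilon x^4}{2}$ and $H(x,v)=\frac{v^2}{2}+\Phi(x)$. For $(x,v)\neq(0,0)$ define the angle $\chi\in\mathbb{R}/2\pi\mathbb{Z}$ by $\chi=\arcsin\big(v/\sqrt{2H}\big)$ if $x>0$ and $\chi=\pi-\arcsin\big(v/\sqrt{2H}\big)$ if $x\leq 0$; then $(x,v)\mapsto(\chi,H)$ is a bijection onto $(\mathbb{R}/2\pi\mathbb{Z})\times(0,\infty)$, and we write $x=x(\chi,H)$. Set $a(\chi,H)=\sqrt{2}\,\frac{1+2\epsilon x^2}{\sqrt{1+\epsilon x^2}}$ with $x=x(\chi,H)$. Define $c(H)>0$ for $H>0$ by $c(H)\int_0^{2\pi}\frac{\mathrm{d}\chi}{a(\chi,H)}=2\pi$; we also write $c(K)$ with $K=H$. *)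

theory Defs
  imports "HOL-Analysis.Analysis"
begin

definition Phi :: "real \<Rightarrow> real \<Rightarrow> real" where
  "Phi eps x = x^2 / 2 + eps * x^4 / 2"

definition Ham :: "real \<Rightarrow> real \<Rightarrow> real \<Rightarrow> real" where
  "Ham eps x v = v^2 / 2 + Phi eps x"

text \<open>The angle chi of (x,v), as a real representative of an element of R/2piZ.\<close>
definition chi_of :: "real \<Rightarrow> real \<Rightarrow> real \<Rightarrow> real" where
  "chi_of eps x v =
     (if x > 0 then arcsin (v / sqrt (2 * Ham eps x v))
      else pi - arcsin (v / sqrt (2 * Ham eps x v)))"

definition mod2pi_eq :: "real \<Rightarrow> real \<Rightarrow> bool" where
  "mod2pi_eq a b \<longleftrightarrow> (\<exists>k::int. a - b = 2 * pi * of_int k)"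

text \<open>x = x(chi,H): inverse of the bijection (x,v) \<mapsto> (chi,H).\<close>
definition x_of :: "real \<Rightarrow> real \<Rightarrow> real \<Rightarrow> real" where
  "x_of eps chi H = fst (THE p. p \<noteq> (0,0) \<and> Ham eps (fst p) (snd p) = H
                              \<and> mod2pi_eq (chi_of eps (fst p) (snd p)) chi)"

definition a_fun :: "real \<Rightarrow> real \<Rightarrow> real \<Rightarrow> real" where
  "a_fun eps chi H = (let x = x_of eps chi H in
      sqrt 2 * (1 + 2 * eps * x^2) / sqrt (1 + eps * x^2))"

definition c_fun :: "real \<Rightarrow> real \<Rightarrow> real" where
  "c_fun eps H = 2 * pi / integral {0..2*pi} (\<lambda>chi. 1 / a_fun eps chi H)"

end

(*
  On the level set H = v^2/2 + Phi(x) the angle chi is the polar angle of (+-sqrt (2 Phi(x)), v)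
  on the circle of radius sqrt (2 H), so Phi(x) = H cos^2 chi, and solving the quadratic in x^2
  gives eps x^2 = (sqrt (1 + 8 eps H cos^2 chi) - 1) / 2.  Hence 1/a(chi,H) = G(8 eps H cos^2 chi)
  with G(t) = sqrt (1 + sqrt (1 + t)) / (2 sqrt (1 + t)), and c(H) = 2 pi / J(H) where
  J(H) = integral of G(8 eps H cos^2 chi) over [0, 2 pi].  Differentiating under the integral,
  c'(H) = - 2 pi J'(H) / J(H)^2.  On [0, T] with T = 8 eps / c_s we have G' <= -1/(16 (1 + T)^4),
  so J'(H) <= - pi eps / (2 (1 + T)^4), while 0 < J(H) <= 2 pi; thus c'(H) >= eps / (4 (1 + T)^4)
  for H in [c_s, 1/c_s].  This works for every eps > 0, so any eps0 will do.
*)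
theory Submission
  imports Defs
begin

lemma has_real_derivative_integral_scaled:
  fixes G G' w :: "real \<Rightarrow> real"
  assumes G: "\<And>t. t \<ge> 0 \<Longrightarrow> (G has_real_derivative G' t) (at t)"
    and G': "continuous_on {0..} G'"
    and w: "continuous_on {a..b} w" "\<And>x. x \<in> {a..b} \<Longrightarrow> w x \<ge> 0"
    and "H > 0"
  shows "((\<lambda>H. integral {a..b} (\<lambda>x. G (H * w x))) has_real_derivative
            integral {a..b} (\<lambda>x. G' (H * w x) * w x)) (at H)"
proof -
  have "continuous_on {0..} G"
    using G by (intro DERIV_continuous_on) (auto intro: has_field_derivative_at_within)
  then have "continuous_on {a..b} (\<lambda>x. G (K * w x))" if "K > 0" for K
    by (rule continuous_on_compose2) (use that w in \<open>auto intro: continuous_on_mult_left\<close>)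
  then have integrable: "(\<lambda>x. G (K * w x)) integrable_on cbox a b" if "K > 0" for K
    using that by (simp add: integrable_continuous_interval)
  have deriv: "((\<lambda>K. G (K * w x)) has_real_derivative G' (K * w x) * w x) (at K within {0<..})"
    if "K \<in> {0<..}" "x \<in> cbox a b" for K x
  proof -
    have inner: "((\<lambda>K. K * w x) has_real_derivative w x) (at K within {0<..})"
      by (auto intro!: derivative_eq_intros)
    have "K * w x \<ge> 0"
      using that w(2) by simp
    from DERIV_chain2[OF G[OF this] inner] show ?thesis
      by simp
  qed
  have w_snd: "continuous_on ({0<..} \<times> cbox a b) (\<lambda>p. w (snd p))"
    by (rule continuous_on_compose2[OF w(1) continuous_on_snd]) auto
  then have "continuous_on ({0<..} \<times> cbox a b) (\<lambda>p. fst p * w (snd p))"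
    by (intro continuous_intros)
  then have "continuous_on ({0<..} \<times> cbox a b) (\<lambda>p. G' (fst p * w (snd p)))"
    by (rule continuous_on_compose2[OF G']) (auto simp: w(2))
  then have "continuous_on ({0<..} \<times> cbox a b) (\<lambda>(K, x). G' (K * w x) * w x)"
    unfolding case_prod_beta by (intro continuous_on_mult w_snd)
  then have "((\<lambda>K. integral (cbox a b) (\<lambda>x. G (K * w x))) has_real_derivative
               integral (cbox a b) (\<lambda>x. G' (H * w x) * w x)) (at H within {0<..})"
    using \<open>H > 0\<close> integrable deriv
    by (intro leibniz_rule_field_derivative[where fx = "\<lambda>K x. G' (K * w x) * w x"])
      (auto simp: convex_real_interval)
  moreover have "at H within {0<..} = at H"
    using \<open>H > 0\<close> by (intro at_within_open) auto
  ultimately show ?thesis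
    by simp
qed

lemma has_integral_cos_sq: "((\<lambda>x. (cos x)^2) has_integral pi) {0..2*pi}"
proof -
  have "((\<lambda>x. x / 2 + sin (2 * x) / 4) has_real_derivative (cos x)^2) (at x within {0..2*pi})"
    for x
  proof -
    have "((\<lambda>x. x / 2 + sin (2 * x) / 4) has_real_derivative 1 / 2 + cos (2 * x) * 2 / 4)
        (at x within {0..2*pi})"
      by (auto intro!: derivative_eq_intros)
    moreover have "1 / 2 + cos (2 * x) * 2 / 4 = (cos x)^2"
      by (subst cos_double_cos) (simp add: field_simps)
    ultimately show ?thesis
      by simp
  qed
  then have "((\<lambda>x. (cos x)^2) has_integral
      (2 * pi / 2 + sin (2 * (2 * pi)) / 4 - (0 / 2 + sin (2 * 0) / 4))) {0..2*pi}"
    by (intro fundamental_theorem_of_calculus)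
      (auto simp: has_real_derivative_iff_has_vector_derivative)
  moreover have "sin (2 * (2 * pi)) = 0"
    using sin_int_2pin[of 2] by (simp add: mult.commute)
  ultimately show ?thesis
    by simp
qed

lemma sqrt_one_plus_bounds:
  fixes t T :: real
  assumes "0 \<le> t" "t \<le> T"
  shows "1 \<le> sqrt (1 + t)" "sqrt (1 + t) \<le> 1 + T"
proof -
  have "(1 + T)^2 = 1 + 2 * T + T * T"
    by (simp add: power2_eq_square algebra_simps)
  then have "1 + t \<le> (1 + T)^2"
    using assms zero_le_square[of T] by linarith
  then show "sqrt (1 + t) \<le> 1 + T"
    using assms by (intro real_le_lsqrt) auto
  show "1 \<le> sqrt (1 + t)"
    using assms by simp
qed

lemma mod2pi_eq_iff_sin_cos: "mod2pi_eq a b \<longleftrightarrow> sin a = sin b \<and> cos a = cos b"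
  unfolding mod2pi_eq_def sin_cos_eq_iff by (auto simp: algebra_simps)

lemma two_Ham_eq: "2 * Ham eps x v = v^2 + 2 * Phi eps x"
  by (simp add: Ham_def)

lemma Phi_pos:
  assumes "eps \<ge> 0" "x \<noteq> 0"
  shows "Phi eps x > 0"
  using assms by (simp add: Phi_def add_pos_nonneg)

lemma two_Phi_eq_iff:
  assumes "eps > 0" "y \<ge> 0"
  shows "2 * Phi eps x = y \<longleftrightarrow> x^2 = (sqrt (1 + 4 * eps * y) - 1) / (2 * eps)"
proof -
  have square: "(2 * eps * x^2 + 1)^2 = 1 + 4 * eps * (2 * Phi eps x)"
    by (simp add: Phi_def power2_eq_square power4_eq_xxxx algebra_simps)
  have "2 * Phi eps x = y \<longleftrightarrow> (2 * eps * x^2 + 1)^2 = 1 + 4 * eps * y"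
    using assms(1) by (simp add: square)
  also have "\<dots> \<longleftrightarrow> sqrt (1 + 4 * eps * y) = 2 * eps * x^2 + 1"
  proof
    assume "(2 * eps * x^2 + 1)^2 = 1 + 4 * eps * y"
    then show "sqrt (1 + 4 * eps * y) = 2 * eps * x^2 + 1"
      by (rule real_sqrt_unique) (use assms(1) in simp)
  next
    assume "sqrt (1 + 4 * eps * y) = 2 * eps * x^2 + 1"
    then show "(2 * eps * x^2 + 1)^2 = 1 + 4 * eps * y"
      using assms by (metis real_sqrt_pow2 add_nonneg_nonneg mult_nonneg_nonneg zero_le_one
          zero_le_numeral less_imp_le)
  qed
  also have "\<dots> \<longleftrightarrow> x^2 = (sqrt (1 + 4 * eps * y) - 1) / (2 * eps)"
    using assms(1) by (auto simp: field_simps)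
  finally show ?thesis .
qed

lemma chi_of_polar:
  assumes "eps > 0" "(x, v) \<noteq> (0, 0)"
  shows "sqrt (2 * Ham eps x v) * sin (chi_of eps x v) = v"
    and "sqrt (2 * Ham eps x v) * cos (chi_of eps x v) =
           (if x > 0 then sqrt (2 * Phi eps x) else - sqrt (2 * Phi eps x))"
proof -
  define R where "R = 2 * Ham eps x v"
  have Phi_nonneg: "Phi eps x \<ge> 0"
    using assms(1) by (simp add: Phi_def)
  have R_eq: "R = v^2 + 2 * Phi eps x"
    by (simp add: R_def two_Ham_eq)
  have "v^2 > 0 \<or> Phi eps x > 0"
    using assms Phi_pos[of eps x] by auto
  hence "R > 0"
    using Phi_nonneg unfolding R_eq by (auto intro: add_pos_nonneg add_nonneg_pos)
  have "\<bar>v\<bar> \<le> sqrt R"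
    using real_sqrt_le_mono[of "v^2" R] R_eq Phi_nonneg by simp
  hence s_bounds: "-1 \<le> v / sqrt R" "v / sqrt R \<le> 1"
    using \<open>R > 0\<close> by (auto simp: divide_le_eq le_divide_eq abs_le_iff)
  have cos_arcsin_eq: "sqrt R * cos (arcsin (v / sqrt R)) = sqrt (2 * Phi eps x)"
  proof -
    have "sqrt R * cos (arcsin (v / sqrt R)) = sqrt (R * (1 - (v / sqrt R)^2))"
      using s_bounds by (simp add: cos_arcsin real_sqrt_mult)
    also have "R * (1 - (v / sqrt R)^2) = 2 * Phi eps x"
      using \<open>R > 0\<close> R_eq by (simp add: power_divide field_simps)
    finally show ?thesis .
  qed
  show "sqrt (2 * Ham eps x v) * sin (chi_of eps x v) = v"
    using s_bounds \<open>R > 0\<close> by (simp add: chi_of_def R_def[symmetric])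
  show "sqrt (2 * Ham eps x v) * cos (chi_of eps x v) =
          (if x > 0 then sqrt (2 * Phi eps x) else - sqrt (2 * Phi eps x))"
    using cos_arcsin_eq by (simp add: chi_of_def R_def[symmetric])
qed

lemma angle_energy_coords:
  assumes "eps > 0" "H > 0" "Ham eps x v = H" "mod2pi_eq (chi_of eps x v) chi"
  shows "v = sqrt (2 * H) * sin chi"
    and "x > 0 \<longleftrightarrow> cos chi > 0"
    and "2 * Phi eps x = 2 * H * (cos chi)^2"
proof -
  have "(x, v) \<noteq> (0, 0)"
    using assms(2,3) by (auto simp: Ham_def Phi_def)
  note polar = chi_of_polar[OF assms(1) this, unfolded assms(3)]
  have trig: "sin (chi_of eps x v) = sin chi" "cos (chi_of eps x v) = cos chi"
    using assms(4) by (simp_all add: mod2pi_eq_iff_sin_cos)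
  show "v = sqrt (2 * H) * sin chi"
    using polar(1) trig by simp
  have cos_eq:
    "sqrt (2 * H) * cos chi = (if x > 0 then sqrt (2 * Phi eps x) else - sqrt (2 * Phi eps x))"
    using polar(2) trig by simp
  have "Phi eps x \<ge> 0"
    using assms(1) by (simp add: Phi_def)
  then show "2 * Phi eps x = 2 * H * (cos chi)^2"
    using arg_cong[OF cos_eq, of "\<lambda>t. t^2"] assms(2)
    by (simp add: power_mult_distrib split: if_splits)
  have "sqrt (2 * H) * cos chi > 0 \<longleftrightarrow> x > 0"
    using cos_eq Phi_pos[of eps x] \<open>Phi eps x \<ge> 0\<close> assms(1) by auto
  then show "x > 0 \<longleftrightarrow> cos chi > 0"
    using assms(2) by (simp add: zero_less_mult_iff)
qed

lemma angle_energy_point_unique: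
  assumes "eps > 0" "H > 0"
  shows "\<exists>!p. p \<noteq> (0, 0) \<and> Ham eps (fst p) (snd p) = H
                \<and> mod2pi_eq (chi_of eps (fst p) (snd p)) chi"
proof (rule ex1I)
  define q where "q = (sqrt (1 + 4 * eps * (2 * H * (cos chi)^2)) - 1) / (2 * eps)"
  have q_nonneg: "q \<ge> 0"
    using assms by (simp add: q_def)
  define x where "x = (if cos chi > 0 then sqrt q else - sqrt q)"
  define v where "v = sqrt (2 * H) * sin chi"
  have Phi_x: "2 * Phi eps x = 2 * H * (cos chi)^2"
    using two_Phi_eq_iff[OF assms(1), of "2 * H * (cos chi)^2"] q_nonneg assms
    by (simp add: x_def q_def)
  have Ham_xv: "Ham eps x v = H"
  proof -
    have "2 * Ham eps x v = v^2 + 2 * H * (cos chi)^2"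
      by (simp add: two_Ham_eq Phi_x)
    also have "\<dots> = 2 * H * ((sin chi)^2 + (cos chi)^2)"
      using assms(2)
      by (simp add: v_def power_mult_distrib del: sin_cos_squared_add) (simp flip: distrib_left)
    finally show ?thesis by simp
  qed
  have "(x, v) \<noteq> (0, 0)"
    using Ham_xv assms(2) by (auto simp: Ham_def Phi_def)
  note polar = chi_of_polar[OF assms(1) this, unfolded Ham_xv]
  have "x \<noteq> 0 \<or> cos chi = 0"
    using Phi_x assms(2) by (auto simp: Phi_def)
  then have "x > 0 \<longleftrightarrow> cos chi > 0"
    using q_nonneg by (auto simp: x_def)
  then have "sqrt (2 * H) * cos (chi_of eps x v) = sqrt (2 * H) * cos chi"
    using polar(2) assms(2) by (auto simp: Phi_x real_sqrt_mult)
  moreover have "sqrt (2 * H) * sin (chi_of eps x v) = sqrt (2 * H) * sin chi"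
    using polar(1) by (simp add: v_def)
  ultimately have "mod2pi_eq (chi_of eps x v) chi"
    using assms(2) by (simp add: mod2pi_eq_iff_sin_cos)
  then show "(x, v) \<noteq> (0, 0) \<and> Ham eps (fst (x, v)) (snd (x, v)) = H
               \<and> mod2pi_eq (chi_of eps (fst (x, v)) (snd (x, v))) chi"
    using \<open>(x, v) \<noteq> (0, 0)\<close> Ham_xv by simp
  fix p :: "real \<times> real"
  assume "p \<noteq> (0, 0) \<and> Ham eps (fst p) (snd p) = H \<and> mod2pi_eq (chi_of eps (fst p) (snd p)) chi"
  then have p_coords:
    "snd p = v" "fst p > 0 \<longleftrightarrow> cos chi > 0" "2 * Phi eps (fst p) = 2 * H * (cos chi)^2"
    using angle_energy_coords[OF assms, of "fst p" "snd p" chi] by (auto simp: v_def)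
  have "\<bar>fst p\<bar> = sqrt q"
    using p_coords(3) two_Phi_eq_iff[OF assms(1), of "2 * H * (cos chi)^2" "fst p"] assms(2)
    by (simp add: q_def flip: real_sqrt_abs)
  then have "fst p = x"
    using p_coords(2) by (auto simp: x_def)
  then show "p = (x, v)"
    using p_coords(1) by (simp add: prod_eq_iff)
qed

lemma x_of_sq:
  assumes "eps > 0" "H > 0"
  shows "(x_of eps chi H)^2 = (sqrt (1 + 8 * eps * H * (cos chi)^2) - 1) / (2 * eps)"
proof -
  let ?P = "\<lambda>p. p \<noteq> (0, 0) \<and> Ham eps (fst p) (snd p) = H
                  \<and> mod2pi_eq (chi_of eps (fst p) (snd p)) chi"
  define p where "p = (THE p. ?P p)"
  have "?P p"
    unfolding p_def by (rule theI'[OF angle_energy_point_unique[OF assms]])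
  then have "2 * Phi eps (fst p) = 2 * H * (cos chi)^2"
    using angle_energy_coords(3)[OF assms] by blast
  then have "2 * Phi eps (x_of eps chi H) = 2 * H * (cos chi)^2"
    by (simp add: x_of_def p_def)
  then show ?thesis
    using two_Phi_eq_iff[OF assms(1), of "2 * H * (cos chi)^2"] assms by (simp add: mult.assoc)
qed

definition inv_a_profile :: "real \<Rightarrow> real" where
  "inv_a_profile t = sqrt (1 + sqrt (1 + t)) / (2 * sqrt (1 + t))"

definition inv_a_profile_deriv :: "real \<Rightarrow> real" where
  "inv_a_profile_deriv t =
     - (sqrt (1 + t) + 2) / (8 * sqrt (1 + t) ^ 3 * sqrt (1 + sqrt (1 + t)))"

lemma inv_a_fun_eq_profile:
  assumes "eps > 0" "H > 0"
  shows "1 / a_fun eps chi H = inv_a_profile (8 * eps * H * (cos chi)^2)"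
proof -
  define S where "S = sqrt (1 + 8 * eps * H * (cos chi)^2)"
  have "S \<ge> 1"
    using assms by (simp add: S_def)
  define x where "x = x_of eps chi H"
  have "eps * x^2 = (S - 1) / 2"
    using x_of_sq[OF assms, of chi] assms(1) by (simp add: x_def S_def)
  then have "1 + 2 * eps * x^2 = S" "1 + eps * x^2 = (1 + S) / 2"
    by (simp_all add: mult.assoc)
  then have "a_fun eps chi H = sqrt 2 * S / sqrt ((1 + S) / 2)"
    by (simp add: a_fun_def Let_def x_def[symmetric])
  also have "\<dots> = 2 * S / sqrt (1 + S)"
    by (simp add: real_sqrt_divide)
  finally show ?thesis
    using \<open>S \<ge> 1\<close> by (simp add: inv_a_profile_def S_def)
qed

lemma has_real_derivative_inv_a_profile:
  assumes "t > -1"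
  shows "(inv_a_profile has_real_derivative inv_a_profile_deriv t) (at t)"
proof -
  define w where "w = sqrt (1 + t)"
  define z where "z = sqrt (1 + w)"
  have "w > 0" "z > 0"
    using assms by (simp_all add: w_def z_def add_pos_pos)
  have "(inv_a_profile has_real_derivative
          (inverse z / 2 * (inverse w / 2) * (2 * w) - z * (2 * (inverse w / 2))) / (2 * w)^2)
        (at t)"
    unfolding inv_a_profile_def[abs_def] using assms \<open>w > 0\<close> \<open>z > 0\<close>
    by (auto intro!: derivative_eq_intros simp: w_def z_def)
  moreover have "(inverse z / 2 * (inverse w / 2) * (2 * w) - z * (2 * (inverse w / 2))) / (2 * w)^2
      = - (w + 2) / (8 * w^3 * z)"
    using \<open>w > 0\<close> \<open>z > 0\<close>
    by (simp add: z_def field_simps power2_eq_square power3_eq_cube)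
  ultimately show ?thesis
    by (simp add: inv_a_profile_deriv_def w_def z_def)
qed

lemma continuous_on_inv_a_profile: "continuous_on {0..} inv_a_profile"
  by (rule DERIV_continuous_on[where D = inv_a_profile_deriv])
    (auto intro!: has_field_derivative_at_within has_real_derivative_inv_a_profile)

lemma continuous_on_inv_a_profile_deriv: "continuous_on {0..} inv_a_profile_deriv"
proof -
  have "1 + sqrt (1 + t) \<noteq> 0" if "t \<ge> 0" for t :: real
    using that real_sqrt_ge_zero[of "1 + t"] by linarith
  then show ?thesis
    unfolding inv_a_profile_deriv_def by (intro continuous_intros) auto
qed

lemma inv_a_profile_bounds:
  assumes "0 \<le> t" "t \<le> T"
  shows "1 / (2 * (1 + T)) \<le> inv_a_profile t" "inv_a_profile t \<le> 1"
proof -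
  define w where "w = sqrt (1 + t)"
  define z where "z = sqrt (1 + w)"
  have w: "1 \<le> w" "w \<le> 1 + T"
    using sqrt_one_plus_bounds[OF assms] by (simp_all add: w_def)
  have z: "1 \<le> z" "z \<le> 1 + w"
    using sqrt_one_plus_bounds[of w w] w by (simp_all add: z_def)
  have profile: "inv_a_profile t = z / (2 * w)"
    by (simp add: inv_a_profile_def w_def z_def)
  have "1 / (2 * (1 + T)) \<le> 1 / (2 * w)"
    using w by (intro divide_left_mono) auto
  also have "\<dots> \<le> z / (2 * w)"
    using w z by (intro divide_right_mono) auto
  finally show "1 / (2 * (1 + T)) \<le> inv_a_profile t"
    by (simp add: profile)
  show "inv_a_profile t \<le> 1"
    using w z by (simp add: profile)
qed

lemma inv_a_profile_deriv_le:
  assumes "0 \<le> t" "t \<le> T"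
  shows "inv_a_profile_deriv t \<le> - 1 / (16 * (1 + T)^4)"
proof -
  define w where "w = sqrt (1 + t)"
  define z where "z = sqrt (1 + w)"
  have w: "1 \<le> w" "w \<le> 1 + T"
    using sqrt_one_plus_bounds[OF assms] by (simp_all add: w_def)
  have z: "1 \<le> z" "z \<le> 2 * (1 + T)"
    using sqrt_one_plus_bounds[of w "1 + T"] w assms by (simp_all add: z_def)
  have "8 * w^3 * z \<le> 8 * (1 + T)^3 * (2 * (1 + T))"
    using w z by (intro mult_mono power_mono) auto
  also have "\<dots> = 16 * (1 + T)^4"
    by (simp add: eval_nat_numeral algebra_simps)
  finally have denominator: "8 * w^3 * z \<le> 16 * (1 + T)^4" .
  have "1 / (16 * (1 + T)^4) \<le> 1 / (8 * w^3 * z)"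
    using denominator w z by (intro divide_left_mono) auto
  also have "\<dots> \<le> (w + 2) / (8 * w^3 * z)"
    using w z by (intro divide_right_mono) auto
  also have "\<dots> = - inv_a_profile_deriv t"
    unfolding inv_a_profile_deriv_def w_def z_def by (simp add: minus_divide_left)
  finally show ?thesis
    by simp
qed

definition inv_a_integral :: "real \<Rightarrow> real \<Rightarrow> real" where
  "inv_a_integral eps H =
     integral {0..2*pi} (\<lambda>chi. inv_a_profile (H * (8 * eps * (cos chi)^2)))"

definition inv_a_integral_deriv :: "real \<Rightarrow> real \<Rightarrow> real" where
  "inv_a_integral_deriv eps H =
     integral {0..2*pi}
       (\<lambda>chi. inv_a_profile_deriv (H * (8 * eps * (cos chi)^2)) * (8 * eps * (cos chi)^2))"

lemma scaled_cos_sq_bounds: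
  fixes eps H T :: real
  assumes "eps \<ge> 0" "H \<ge> 0" "8 * eps * H \<le> T"
  shows "0 \<le> H * (8 * eps * (cos x)^2)" "H * (8 * eps * (cos x)^2) \<le> T"
proof -
  show "0 \<le> H * (8 * eps * (cos x)^2)"
    using assms by simp
  have "H * (8 * eps * (cos x)^2) \<le> H * (8 * eps * 1)"
    using assms by (intro mult_left_mono) (auto simp: abs_square_le_1)
  also have "\<dots> \<le> T"
    using assms(3) by (simp add: mult_ac)
  finally show "H * (8 * eps * (cos x)^2) \<le> T" .
qed

lemma continuous_on_comp_scaled_cos_sq:
  fixes F :: "real \<Rightarrow> real"
  assumes "continuous_on {0..} F" "eps \<ge> 0" "H \<ge> 0"
  shows "continuous_on {0..2*pi} (\<lambda>x. F (H * (8 * eps * (cos x)^2)))"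
proof -
  have "continuous_on {0..2*pi} (\<lambda>x. H * (8 * eps * (cos x)^2))"
    by (intro continuous_intros)
  then show ?thesis
    by (rule continuous_on_compose2[OF assms(1)]) (use assms(2,3) in auto)
qed

lemma c_fun_eq_inv_a_integral:
  assumes "eps > 0" "H > 0"
  shows "c_fun eps H = 2 * pi / inv_a_integral eps H"
  using assms by (simp add: c_fun_def inv_a_integral_def inv_a_fun_eq_profile mult_ac)

lemma has_real_derivative_inv_a_integral:
  assumes "eps > 0" "H > 0"
  shows "(inv_a_integral eps has_real_derivative inv_a_integral_deriv eps H) (at H)"
  unfolding inv_a_integral_def[abs_def] inv_a_integral_deriv_def
  using assms by (intro has_real_derivative_integral_scaled has_real_derivative_inv_a_profile
      continuous_on_inv_a_profile_deriv continuous_intros) auto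

lemma inv_a_integral_bounds:
  assumes "eps > 0" "H > 0"
  shows "0 < inv_a_integral eps H" "inv_a_integral eps H \<le> 2 * pi"
proof -
  note range = scaled_cos_sq_bounds[of eps H "8 * eps * H"]
  have "continuous_on {0..2*pi} (\<lambda>x. inv_a_profile (H * (8 * eps * (cos x)^2)))"
    using assms by (intro continuous_on_comp_scaled_cos_sq continuous_on_inv_a_profile) auto
  then have integrable:
    "(\<lambda>x. inv_a_profile (H * (8 * eps * (cos x)^2))) integrable_on {0..2*pi}"
    by (simp add: integrable_continuous_interval)
  have "integral {0..2*pi} (\<lambda>x. 1 / (2 * (1 + 8 * eps * H))) \<le> inv_a_integral eps H"
    unfolding inv_a_integral_def
    by (rule integral_le[OF _ integrable]) (use assms inv_a_profile_bounds(1)[OF range] in auto)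
  moreover have "0 < integral {0..2*pi} (\<lambda>x. 1 / (2 * (1 + 8 * eps * H)))"
    using assms by (simp add: add_pos_pos)
  ultimately show "0 < inv_a_integral eps H"
    by linarith
  have "inv_a_integral eps H \<le> integral {0..2*pi} (\<lambda>x. 1)"
    unfolding inv_a_integral_def
    by (rule integral_le[OF integrable]) (use assms inv_a_profile_bounds(2)[OF range] in auto)
  then show "inv_a_integral eps H \<le> 2 * pi"
    by simp
qed

lemma inv_a_integral_deriv_le:
  assumes "eps > 0" "H > 0" "8 * eps * H \<le> T"
  shows "inv_a_integral_deriv eps H \<le> - pi * eps / (2 * (1 + T)^4)"
proof -
  define m where "m = 1 / (16 * (1 + T)^4)"
  have range: "0 \<le> H * (8 * eps * (cos x)^2)" "H * (8 * eps * (cos x)^2) \<le> T" for x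
    using scaled_cos_sq_bounds[of eps H T x] assms by auto
  have "continuous_on {0..2*pi} (\<lambda>x. inv_a_profile_deriv (H * (8 * eps * (cos x)^2)))"
    using assms by (intro continuous_on_comp_scaled_cos_sq continuous_on_inv_a_profile_deriv) auto
  then have "continuous_on {0..2*pi}
      (\<lambda>x. inv_a_profile_deriv (H * (8 * eps * (cos x)^2)) * (8 * eps * (cos x)^2))"
    by (intro continuous_intros)
  then have integrable:
    "(\<lambda>x. inv_a_profile_deriv (H * (8 * eps * (cos x)^2)) * (8 * eps * (cos x)^2))
      integrable_on {0..2*pi}"
    by (simp add: integrable_continuous_interval)
  have pointwise: "inv_a_profile_deriv (H * (8 * eps * (cos x)^2)) * (8 * eps * (cos x)^2)
      \<le> (- m * 8 * eps) * (cos x)^2" for x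
  proof -
    have "inv_a_profile_deriv (H * (8 * eps * (cos x)^2)) \<le> - m"
      using inv_a_profile_deriv_le[OF range] by (simp add: m_def)
    then have "inv_a_profile_deriv (H * (8 * eps * (cos x)^2)) * (8 * eps * (cos x)^2)
        \<le> - m * (8 * eps * (cos x)^2)"
      by (rule mult_right_mono) (use assms(1) in simp)
    then show ?thesis
      by (simp only: mult.assoc)
  qed
  have "(\<lambda>x. (- m * 8 * eps) * (cos x)^2) integrable_on {0..2*pi}"
    using has_integral_mult_right[OF has_integral_cos_sq] by (rule has_integral_integrable)
  then have "inv_a_integral_deriv eps H
      \<le> integral {0..2*pi} (\<lambda>x. (- m * 8 * eps) * (cos x)^2)"
    unfolding inv_a_integral_deriv_def by (rule integral_le[OF integrable _ pointwise])
  also have "\<dots> = - m * 8 * eps * pi"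
    by (rule integral_unique[OF has_integral_mult_right[OF has_integral_cos_sq]])
  also have "\<dots> = - pi * eps / (2 * (1 + T)^4)"
    by (simp add: m_def field_simps)
  finally show ?thesis .
qed

lemma has_real_derivative_c_fun:
  assumes "eps > 0" "H > 0"
  shows "(c_fun eps has_real_derivative
           - 2 * pi * inv_a_integral_deriv eps H / (inv_a_integral eps H)^2) (at H)"
proof -
  have "((\<lambda>K. 2 * pi / inv_a_integral eps K) has_real_derivative
      (0 * inv_a_integral eps H - 2 * pi * inv_a_integral_deriv eps H)
        / (inv_a_integral eps H * inv_a_integral eps H)) (at H)"
    using inv_a_integral_bounds(1)[OF assms]
    by (intro DERIV_divide DERIV_const has_real_derivative_inv_a_integral assms) simp
  then have "((\<lambda>K. 2 * pi / inv_a_integral eps K) has_real_derivative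
      - 2 * pi * inv_a_integral_deriv eps H / (inv_a_integral eps H)^2) (at H)"
    by (simp add: power2_eq_square)
  then show ?thesis
    by (rule has_field_derivative_transform_within_open[where S = "{0<..}"])
      (use assms in \<open>auto simp: c_fun_eq_inv_a_integral\<close>)
qed

lemma c_fun_deriv_lower_bound:
  assumes "eps > 0" "H > 0" "8 * eps * H \<le> T"
  shows "eps / (4 * (1 + T)^4)
           \<le> - 2 * pi * inv_a_integral_deriv eps H / (inv_a_integral eps H)^2"
proof -
  define b where "b = pi * eps / (2 * (1 + T)^4)"
  define J where "J = inv_a_integral eps H"
  have J: "0 < J" "J \<le> 2 * pi"
    using inv_a_integral_bounds[OF assms(1,2)] by (simp_all add: J_def)
  have "0 < 8 * eps * H"
    using assms(1,2) by simp
  then have "T \<ge> 0"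
    using assms(3) by linarith
  then have "b > 0"
    using assms(1) by (simp add: b_def add_pos_nonneg)
  have "eps / (4 * (1 + T)^4) = 2 * pi * b / (2 * pi)^2"
    by (simp add: b_def field_simps power2_eq_square)
  also have "\<dots> \<le> 2 * pi * b / J^2"
    using J \<open>b > 0\<close> by (intro divide_left_mono power_mono) auto
  also have "\<dots> \<le> 2 * pi * (- inv_a_integral_deriv eps H) / J^2"
    using inv_a_integral_deriv_le[OF assms]
    by (intro divide_right_mono mult_left_mono) (auto simp: b_def)
  finally show ?thesis
    by (simp add: J_def)
qed

lemma c_fun_deriv_uniform_lower_bound:
  assumes "eps > 0" "cs > 0"
  shows "\<exists>\<delta>>0. \<forall>K \<in> {cs..1/cs}.
           \<exists>D. (c_fun eps has_real_derivative D) (at K) \<and> \<bar>D\<bar> \<ge> \<delta>"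
proof -
  define T where "T = 8 * eps / cs"
  have "T \<ge> 0"
    using assms by (simp add: T_def)
  then have "eps / (4 * (1 + T)^4) > 0"
    using assms(1) by (simp add: add_pos_nonneg)
  moreover have
    "\<exists>D. (c_fun eps has_real_derivative D) (at K) \<and> \<bar>D\<bar> \<ge> eps / (4 * (1 + T)^4)"
    if "K \<in> {cs..1/cs}" for K
  proof -
    have K: "K > 0" "8 * eps * K \<le> T"
      using that assms by (auto simp: T_def field_simps)
    let ?D = "- 2 * pi * inv_a_integral_deriv eps K / (inv_a_integral eps K)^2"
    have "(c_fun eps has_real_derivative ?D) (at K)"
      using assms(1) K(1) by (rule has_real_derivative_c_fun)
    moreover have "eps / (4 * (1 + T)^4) \<le> ?D"
      using assms(1) K by (rule c_fun_deriv_lower_bound)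
    ultimately show ?thesis
      by (meson abs_ge_self order_trans)
  qed
  ultimately show ?thesis
    by blast
qed

theorem lemma4p3:
  shows "\<forall>cs::real. cs > 0 \<longrightarrow>
    (\<exists>eps0::real. eps0 > 0 \<and>
      (\<forall>eps. 0 < eps \<and> eps \<le> eps0 \<longrightarrow>
        (\<exists>\<delta>::real. \<delta> > 0 \<and>
          (\<forall>K \<in> {cs..1/cs}. \<exists>D. (c_fun eps has_real_derivative D) (at K) \<and> \<bar>D\<bar> \<ge> \<delta>))))"
  using c_fun_deriv_uniform_lower_bound zero_less_one by blast

end
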